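(* In the Dirac setting, with $\Sigma_\Psi=\tanh(\beta H/2)$, $\mathscr{A},\mathscr{B}\subset\mathscr{C}$ open and disjoint with $\mathscr{B}'=\mathscr{C}\setminus\overline{\mathscr{B}}$ such that $P_{\mathscr{B}}+P_{\mathscr{B}'}=I$, one has the operator inequality $$P_{\mathscr{A}}\big(P_{\mathscr{B}'}-\Sigma_{\Psi,\mathscr{B}'}^2\big)P_{\mathscr{A}}\le \big(P_{\mathscr{A}}+|P_{\mathscr{B}}\Sigma_\Psi P_{\mathscr{A}}|\big)^2 .$$
   Context: $\mathfrak{K}$ is the Hilbert space of Dirac Cauchy data on $\mathscr{C}$, $H$ the self-adjoint one-particle Dirac Hamiltonian, $\beta>0$. $P_{\mathscr{V}}$ is the orthogonal projection onto data supported in $\mathscr{V}$ (multiplication by the indicator function), $\Sigma_{\Psi,\mathscr{B}'}:=P_{\mathscr{B}'}\Sigma_\Psi P_{\mathscr{B}'}$, and $|T|:=(T^*T)^{1/2}$. *)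

theory Defs
  imports "HOL-Analysis.Analysis"
begin

text \<open>Operators on a Hilbert space K, modelled as functions K \<Rightarrow> K on a type of class
  real_inner + complete_space (a complex Hilbert space viewed as a real Hilbert space with
  the inner product Re of the complex one).\<close>

definition op_adj :: "('a::real_inner \<Rightarrow> 'a) \<Rightarrow> ('a \<Rightarrow> 'a)" where
  "op_adj T = (THE S. \<forall>x y. inner (T x) y = inner x (S y))"

definition self_adjoint_op :: "('a::real_inner \<Rightarrow> 'a) \<Rightarrow> bool" where
  "self_adjoint_op T \<longleftrightarrow> bounded_linear T \<and> (\<forall>x y. inner (T x) y = inner x (T y))"

definition positive_op :: "('a::real_inner \<Rightarrow> 'a) \<Rightarrow> bool" where
  "positive_op T \<longleftrightarrow> self_adjoint_op T \<and> (\<forall>x. 0 \<le> inner x (T x))"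

definition op_le :: "('a::real_inner \<Rightarrow> 'a) \<Rightarrow> ('a \<Rightarrow> 'a) \<Rightarrow> bool" where
  "op_le S T \<longleftrightarrow> positive_op (\<lambda>x. T x - S x)"

definition orth_proj :: "('a::real_inner \<Rightarrow> 'a) \<Rightarrow> bool" where
  "orth_proj P \<longleftrightarrow> self_adjoint_op P \<and> P \<circ> P = P"

definition op_abs :: "('a::real_inner \<Rightarrow> 'a) \<Rightarrow> ('a \<Rightarrow> 'a)" where
  "op_abs T = (THE S. positive_op S \<and> S \<circ> S = op_adj T \<circ> T)"

text \<open>Localisation: P V is multiplication by the indicator of the (open) region V of the
  Cauchy surface C (here the topological space 'x).\<close>
definition localization :: "('x::topological_space set \<Rightarrow> 'a::real_inner \<Rightarrow> 'a) \<Rightarrow> bool" where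
  "localization P \<longleftrightarrow>
     (\<forall>V. open V \<longrightarrow> orth_proj (P V)) \<and>
     (\<forall>V W. open V \<longrightarrow> open W \<longrightarrow> P (V \<inter> W) = P V \<circ> P W) \<and>
     P UNIV = id \<and> P {} = (\<lambda>_. 0)"

end

theory Submission
  imports Defs
begin

text \<open>Write \<open>X = P\<^sub>B \<Sigma> P\<^sub>A\<close>. Because \<open>P\<^sub>A P\<^sub>B = 0\<close> and \<open>P\<^sub>B\<^sub>' = I - P\<^sub>B\<close>, the left-hand side
  equals \<open>P\<^sub>A - P\<^sub>A \<Sigma>\<^sup>2 P\<^sub>A + |X|\<^sup>2\<close>, and since \<open>|X| P\<^sub>A = P\<^sub>A |X| = |X|\<close> the right-hand side is
  \<open>P\<^sub>A + 2|X| + |X|\<^sup>2\<close>. The difference \<open>2|X| + (\<Sigma> P\<^sub>A)\<^sup>*(\<Sigma> P\<^sub>A)\<close> is positive.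
  The analytic content is that \<open>|X|\<close> exists and is unique: \<open>X\<close> is a contraction, so
  \<open>|X| = (I - (I - X\<^sup>*X))\<^sup>1\<^sup>/\<^sup>2\<close> is given by the absolutely convergent binomial series of
  \<open>\<surd>(1 - t)\<close>, and a positive square root that commutes with \<open>X\<^sup>*X\<close> is unique.\<close>

lemma gbinomial_Suc_ratio:
  fixes a :: "'a::field_char_0"
  shows "a gchoose Suc k = (a - of_nat k) * (a gchoose k) / of_nat (Suc k)"
proof -
  have "of_nat (Suc k) \<noteq> (0::'a)"
    by (rule of_nat_neq_0)
  then show ?thesis
    using gbinomial_mult_1[of a k] by (simp add: field_simps del: of_nat_Suc)
qed

text \<open>The Taylor coefficients of \<open>\<surd>(1 - t)\<close> at \<open>0\<close>.\<close>
definition sqrt_coeff :: "nat \<Rightarrow> real" where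
  "sqrt_coeff k = (-1) ^ k * ((1/2) gchoose k)"

lemma sqrt_coeff_0 [simp]: "sqrt_coeff 0 = 1"
  by (simp add: sqrt_coeff_def)

lemma sqrt_coeff_Suc: "sqrt_coeff (Suc k) = sqrt_coeff k * (real k - 1/2) / (real k + 1)"
  by (simp add: sqrt_coeff_def gbinomial_Suc_ratio field_simps)

lemma sqrt_coeff_nonpos: "0 < k \<Longrightarrow> sqrt_coeff k \<le> 0"
proof (induction k rule: nat_induct_non_zero)
  case 1
  then show ?case by (simp add: sqrt_coeff_Suc[of 0])
next
  case (Suc k)
  then show ?case by (simp add: sqrt_coeff_Suc divide_nonpos_pos mult_nonpos_nonneg)
qed

lemma sum_sqrt_coeff: "(\<Sum>k\<le>n. sqrt_coeff k) = (-1) ^ n * ((-1/2) gchoose n)"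
proof (induction n)
  case (Suc n)
  have "(1/2::real) gchoose Suc n = ((-1/2) gchoose n) + ((-1/2) gchoose Suc n)"
    using gbinomial_Suc_Suc[of "-1/2::real" n] by simp
  with Suc show ?case by (simp add: sqrt_coeff_def algebra_simps)
qed simp

lemma sum_sqrt_coeff_nonneg: "0 \<le> (\<Sum>k\<le>n. sqrt_coeff k)"
proof -
  have "0 \<le> (-1) ^ n * ((-1/2::real) gchoose n)"
  proof (induction n)
    case (Suc n)
    have "(-1) ^ Suc n * ((-1/2::real) gchoose Suc n)
        = (-1) ^ n * ((-1/2) gchoose n) * (real n + 1/2) / (real n + 1)"
      by (simp add: gbinomial_Suc_ratio field_simps)
    with Suc show ?case by simp
  qed simp
  then show ?thesis by (simp add: sum_sqrt_coeff)
qed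

lemma sum_abs_sqrt_coeff_le: "(\<Sum>k<n. \<bar>sqrt_coeff k\<bar>) \<le> 2"
proof (cases n)
  case (Suc m)
  have "(\<Sum>k<n. \<bar>sqrt_coeff k\<bar> + sqrt_coeff k) = (\<Sum>k<n. if k = 0 then 2 else 0)"
    by (rule sum.cong) (use sqrt_coeff_nonpos in auto)
  also have "\<dots> = 2"
    using Suc by simp
  finally show ?thesis
    using sum_sqrt_coeff_nonneg[of m] Suc by (simp add: sum.distrib lessThan_Suc_atMost)
qed simp

lemma summable_abs_sqrt_coeff: "summable (\<lambda>k. \<bar>sqrt_coeff k\<bar>)"
  by (rule summableI_nonneg_bounded[where x=2]) (auto intro: sum_abs_sqrt_coeff_le)

lemma summable_sqrt_coeff: "summable sqrt_coeff"
  using summable_abs_sqrt_coeff by (rule summable_rabs_cancel)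

lemma suminf_sqrt_coeff_nonneg: "0 \<le> suminf sqrt_coeff"
proof -
  have "(\<lambda>n. \<Sum>k\<le>n. sqrt_coeff k) \<longlonglongrightarrow> suminf sqrt_coeff"
    by (rule summable_LIMSEQ'[OF summable_sqrt_coeff])
  then show ?thesis
    by (rule LIMSEQ_le_const) (auto intro: sum_sqrt_coeff_nonneg)
qed

lemma sqrt_coeff_convolution:
  "(\<Sum>i\<le>n. sqrt_coeff i * sqrt_coeff (n - i)) = (if n = 0 then 1 else if n = 1 then -1 else 0)"
proof -
  have "(\<Sum>i\<le>n. sqrt_coeff i * sqrt_coeff (n - i))
      = (-1) ^ n * (\<Sum>i\<le>n. ((1/2) gchoose i) * ((1/2) gchoose (n - i)))"
    unfolding sum_distrib_left
  proof (rule sum.cong)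
    fix i assume "i \<in> {..n}"
    then have "(-1::real) ^ i * (-1) ^ (n - i) = (-1) ^ n"
      by (simp flip: power_add)
    then show "sqrt_coeff i * sqrt_coeff (n - i)
        = (-1) ^ n * (((1/2) gchoose i) * ((1/2) gchoose (n - i)))"
      unfolding sqrt_coeff_def by (metis mult.assoc mult.left_commute)
  qed simp
  also have "\<dots> = (-1) ^ n * ((1::real) gchoose n)"
    by (simp add: atMost_atLeast0 gbinomial_Vandermonde)
  also have "\<dots> = (if n = 0 then 1 else if n = 1 then -1 else 0)"
    using binomial_gbinomial[of 1 n, where 'a=real] by (cases n) (auto simp: binomial_eq_0)
  finally show ?thesis .
qed

lemma summable_norm_cancel_complete:
  fixes f :: "nat \<Rightarrow> 'a::{real_normed_vector, complete_space}"
  assumes summable: "summable (\<lambda>n. norm (f n))"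
  shows "summable f"
proof (rule summable_bounded_partials)
  let ?tail = "\<lambda>a. (\<Sum>n. norm (f n)) - (\<Sum>n\<le>a. norm (f n))"
  show "?tail \<longlonglongrightarrow> 0"
    using tendsto_diff[OF tendsto_const[of "\<Sum>n. norm (f n)"] summable_LIMSEQ'[OF summable]]
    by simp
  have "norm (sum f {a<..b}) \<le> ?tail a" if "a < b" for a b
  proof -
    have "norm (sum f {a<..b}) \<le> (\<Sum>n\<in>{a<..b}. norm (f n))"
      by (rule norm_sum)
    also have "\<dots> = (\<Sum>n\<le>b. norm (f n)) - (\<Sum>n\<le>a. norm (f n))"
    proof -
      have "{..b} - {..a} = {a<..b}"
        by auto
      then show ?thesis
        using that sum_diff[of "{..b}" "{..a}" "\<lambda>n. norm (f n)"] by simp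
    qed
    also have "\<dots> \<le> ?tail a"
      using sum_le_suminf[OF summable, of "{..b}"] by simp
    finally show ?thesis .
  qed
  then show "\<forall>\<^sub>F a in sequentially. \<forall>a'\<ge>a. \<forall>b>a'. norm (sum f {a'<..b}) \<le> ?tail a'"
    by simp
qed

lemma sum_square_minus_triangle_tendsto_0:
  fixes a :: "nat \<Rightarrow> real"
  assumes summable: "summable (\<lambda>k. \<bar>a k\<bar>)"
  shows "(\<lambda>n. \<Sum>(i, j) \<in> {..<n} \<times> {..<n} - {(i, j). i + j < n}. \<bar>a i\<bar> * \<bar>a j\<bar>)
           \<longlonglongrightarrow> 0"
proof -
  let ?A = "\<Sum>k. \<bar>a k\<bar>"
  have "(\<lambda>n. (\<Sum>k<n. \<bar>a k\<bar>) * (\<Sum>k<n. \<bar>a k\<bar>)) \<longlonglongrightarrow> ?A * ?A"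
    using summable by (intro tendsto_mult summable_LIMSEQ)
  then have square: "(\<lambda>n. \<Sum>(i, j) \<in> {..<n} \<times> {..<n}. \<bar>a i\<bar> * \<bar>a j\<bar>) \<longlonglongrightarrow> ?A * ?A"
    by (simp add: sum_product sum.cartesian_product)
  have "(\<lambda>k. \<Sum>i\<le>k. \<bar>a i\<bar> * \<bar>a (k - i)\<bar>) sums (?A * ?A)"
    using summable by (intro Cauchy_product_sums) simp_all
  then have triangle: "(\<lambda>n. \<Sum>(i, j) \<in> {(i, j). i + j < n}. \<bar>a i\<bar> * \<bar>a j\<bar>) \<longlonglongrightarrow> ?A * ?A"
    by (simp add: sums_def sum.triangle_reindex)
  have "{(i, j). i + j < n} \<subseteq> {..<n} \<times> {..<n}" for n :: nat
    by auto
  then show ?thesis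
    using tendsto_diff[OF square triangle] by (simp add: sum_diff)
qed

definition sqrt_id_minus :: "('a::real_normed_vector \<Rightarrow> 'a) \<Rightarrow> 'a \<Rightarrow> 'a" where
  "sqrt_id_minus N x = (\<Sum>k. sqrt_coeff k *\<^sub>R (N ^^ k) x)"

locale contraction =
  fixes N :: "'a::{real_normed_vector, complete_space} \<Rightarrow> 'a"
  assumes bounded_linear_N: "bounded_linear N"
    and norm_N_le: "norm (N x) \<le> norm x"
begin

lemma bounded_linear_funpow: "bounded_linear (N ^^ k)"
proof (induction k)
  case 0
  show ?case
    using bounded_linear_ident by (simp add: id_def)
next
  case (Suc k)
  then show ?case
    using bounded_linear_compose[OF bounded_linear_N] by (simp add: o_def)
qed

lemma norm_funpow_le: "norm ((N ^^ k) x) \<le> norm x"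
  by (induction k) (auto intro: order_trans[OF norm_N_le])

lemma norm_sqrt_term_le: "norm (sqrt_coeff k *\<^sub>R (N ^^ k) x) \<le> \<bar>sqrt_coeff k\<bar> * norm x"
  by (simp add: norm_funpow_le mult_left_mono)

lemma summable_sqrt_terms: "summable (\<lambda>k. sqrt_coeff k *\<^sub>R (N ^^ k) x)"
proof (rule summable_norm_cancel_complete, rule summable_comparison_test')
  show "summable (\<lambda>k. \<bar>sqrt_coeff k\<bar> * norm x)"
    using summable_abs_sqrt_coeff by (rule summable_mult2)
qed (simp only: norm_ge_zero real_norm_def abs_of_nonneg, rule norm_sqrt_term_le)

definition sqrt_partial :: "nat \<Rightarrow> 'a \<Rightarrow> 'a" where
  "sqrt_partial n x = (\<Sum>k<n. sqrt_coeff k *\<^sub>R (N ^^ k) x)"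

lemma sqrt_partial_tendsto: "(\<lambda>n. sqrt_partial n x) \<longlonglongrightarrow> sqrt_id_minus N x"
  unfolding sqrt_partial_def sqrt_id_minus_def by (rule summable_LIMSEQ[OF summable_sqrt_terms])

lemma sqrt_partial_diff: "sqrt_partial n (x - y) = sqrt_partial n x - sqrt_partial n y"
  unfolding sqrt_partial_def
  by (simp add: linear_diff[OF bounded_linear.linear[OF bounded_linear_funpow]]
      scaleR_diff_right sum_subtractf)

lemma norm_sqrt_partial_le: "norm (sqrt_partial n x) \<le> (\<Sum>k. \<bar>sqrt_coeff k\<bar>) * norm x"
proof -
  have "norm (sqrt_partial n x) \<le> (\<Sum>k<n. \<bar>sqrt_coeff k\<bar> * norm x)"
    unfolding sqrt_partial_def by (rule sum_norm_le) (rule norm_sqrt_term_le)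
  also have "\<dots> \<le> (\<Sum>k. \<bar>sqrt_coeff k\<bar>) * norm x"
    unfolding sum_distrib_right[symmetric]
    by (rule mult_right_mono[OF sum_le_suminf[OF summable_abs_sqrt_coeff]]) auto
  finally show ?thesis .
qed

lemma bounded_linear_sqrt_id_minus: "bounded_linear (sqrt_id_minus N)"
proof (rule bounded_linear_intro)
  show "sqrt_id_minus N (x + y) = sqrt_id_minus N x + sqrt_id_minus N y" for x y
    unfolding sqrt_id_minus_def
    by (simp add: suminf_add[OF summable_sqrt_terms summable_sqrt_terms] scaleR_add_right
        linear_add[OF bounded_linear.linear[OF bounded_linear_funpow]])
  show "sqrt_id_minus N (r *\<^sub>R x) = r *\<^sub>R sqrt_id_minus N x" for r x
    unfolding sqrt_id_minus_def
    by (simp add: bounded_linear.suminf[OF bounded_linear_scaleR_right summable_sqrt_terms]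
        linear_scale[OF bounded_linear.linear[OF bounded_linear_funpow]] mult.commute)
  show "norm (sqrt_id_minus N x) \<le> norm x * (\<Sum>k. \<bar>sqrt_coeff k\<bar>)" for x
    by (rule LIMSEQ_le_const2[OF tendsto_norm[OF sqrt_partial_tendsto]])
      (metis norm_sqrt_partial_le mult.commute)
qed

lemma sqrt_partial_squared:
  "sqrt_partial n (sqrt_partial n x)
     = (\<Sum>(i, j) \<in> {..<n} \<times> {..<n}. (sqrt_coeff i * sqrt_coeff j) *\<^sub>R (N ^^ (i + j)) x)"
  unfolding sqrt_partial_def sum.cartesian_product[symmetric]
  by (simp add: linear_sum[OF bounded_linear.linear[OF bounded_linear_funpow]]
      linear_scale[OF bounded_linear.linear[OF bounded_linear_funpow]]
      scaleR_sum_right funpow_add)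

lemma sqrt_partial_squared_tendsto:
  "(\<lambda>n. sqrt_partial n (sqrt_partial n x)) \<longlonglongrightarrow> sqrt_id_minus N (sqrt_id_minus N x)"
proof -
  let ?S = "sqrt_id_minus N"
  have "(\<lambda>n. sqrt_partial n (sqrt_partial n x) - sqrt_partial n (?S x)) \<longlonglongrightarrow> 0"
  proof (rule tendsto_0_le[where K="\<Sum>k. \<bar>sqrt_coeff k\<bar>"])
    show "(\<lambda>n. sqrt_partial n x - ?S x) \<longlonglongrightarrow> 0"
      using sqrt_partial_tendsto by (rule LIM_zero)
    show "\<forall>\<^sub>F n in sequentially. norm (sqrt_partial n (sqrt_partial n x) - sqrt_partial n (?S x))
        \<le> norm (sqrt_partial n x - ?S x) * (\<Sum>k. \<bar>sqrt_coeff k\<bar>)"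
      by (simp add: sqrt_partial_diff[symmetric] norm_sqrt_partial_le mult.commute)
  qed
  from tendsto_add[OF this sqrt_partial_tendsto[of "?S x"]] show ?thesis
    by simp
qed

lemma sum_triangle_sqrt_terms:
  assumes "2 \<le> n"
  shows "(\<Sum>(i, j) \<in> {(i, j). i + j < n}. (sqrt_coeff i * sqrt_coeff j) *\<^sub>R (N ^^ (i + j)) x)
           = x - N x"
proof -
  have "(\<Sum>(i, j) \<in> {(i, j). i + j < n}. (sqrt_coeff i * sqrt_coeff j) *\<^sub>R (N ^^ (i + j)) x)
      = (\<Sum>k<n. (\<Sum>i\<le>k. sqrt_coeff i * sqrt_coeff (k - i)) *\<^sub>R (N ^^ k) x)"
    by (simp add: sum.triangle_reindex scaleR_sum_left)
  also have "\<dots> = (\<Sum>k\<in>{0, 1}. (if k = 0 then 1 else -1) *\<^sub>R (N ^^ k) x)"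
    using assms by (intro sum.mono_neutral_cong_right) (auto simp: sqrt_coeff_convolution)
  also have "\<dots> = x - N x"
    by simp
  finally show ?thesis .
qed

text \<open>The square of the \<open>n\<close>-th partial sum differs from the \<open>n\<close>-th partial sum of the
  Cauchy square of the series, which equals \<open>x - N x\<close> once \<open>n \<ge> 2\<close>, only in the terms with
  \<open>i, j < n \<le> i + j\<close>.\<close>
lemma sqrt_id_minus_squared: "sqrt_id_minus N (sqrt_id_minus N x) = x - N x"
proof -
  define g where "g = (\<lambda>(i, j). (sqrt_coeff i * sqrt_coeff j) *\<^sub>R (N ^^ (i + j)) x)"
  let ?square = "\<lambda>n::nat. {..<n} \<times> {..<n}" and ?triangle = "\<lambda>n::nat. {(i, j). i + j < n}"
  have "(\<lambda>n. sum g (?square n) - sum g (?triangle n)) \<longlonglongrightarrow> 0"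
  proof (rule tendsto_0_le[where K="norm x"])
    show "(\<lambda>n. \<Sum>(i, j) \<in> ?square n - ?triangle n. \<bar>sqrt_coeff i\<bar> * \<bar>sqrt_coeff j\<bar>) \<longlonglongrightarrow> 0"
      using summable_abs_sqrt_coeff by (rule sum_square_minus_triangle_tendsto_0)
    have "norm (sum g (?square n) - sum g (?triangle n))
        \<le> (\<Sum>(i, j) \<in> ?square n - ?triangle n. \<bar>sqrt_coeff i\<bar> * \<bar>sqrt_coeff j\<bar>) * norm x" for n
    proof -
      have "?triangle n \<subseteq> ?square n"
        by auto
      then have "sum g (?square n) - sum g (?triangle n) = sum g (?square n - ?triangle n)"
        by (simp add: sum_diff)
      also have "norm \<dots> \<le> (\<Sum>(i, j) \<in> ?square n - ?triangle n. \<bar>sqrt_coeff i\<bar> * \<bar>sqrt_coeff j\<bar> * norm x)"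
        unfolding g_def
        by (rule sum_norm_le) (auto simp: abs_mult norm_funpow_le mult_left_mono)
      finally show ?thesis
        by (simp add: sum_distrib_right case_prod_unfold)
    qed
    then show "\<forall>\<^sub>F n in sequentially. norm (sum g (?square n) - sum g (?triangle n))
        \<le> norm (\<Sum>(i, j) \<in> ?square n - ?triangle n. \<bar>sqrt_coeff i\<bar> * \<bar>sqrt_coeff j\<bar>) * norm x"
      by (simp add: case_prod_unfold sum_nonneg)
  qed
  moreover have "(\<lambda>n. sum g (?square n)) \<longlonglongrightarrow> sqrt_id_minus N (sqrt_id_minus N x)"
    using sqrt_partial_squared_tendsto by (simp add: sqrt_partial_squared g_def)
  ultimately have "(\<lambda>n. sum g (?triangle n)) \<longlonglongrightarrow> sqrt_id_minus N (sqrt_id_minus N x)"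
    by (rule Lim_transform2[rotated])
  moreover have "(\<lambda>n. sum g (?triangle n)) \<longlonglongrightarrow> x - N x"
    using eventually_ge_at_top[of 2]
    by (rule tendsto_eventually[OF eventually_mono]) (simp add: g_def sum_triangle_sqrt_terms)
  ultimately show ?thesis
    by (rule LIMSEQ_unique)
qed

lemma sqrt_id_minus_commute:
  assumes T: "bounded_linear T" and commute: "\<And>x. T (N x) = N (T x)"
  shows "T (sqrt_id_minus N x) = sqrt_id_minus N (T x)"
proof -
  have "T ((N ^^ k) y) = (N ^^ k) (T y)" for k y
    by (induction k) (simp_all add: commute)
  then show ?thesis
    unfolding sqrt_id_minus_def
    by (simp add: bounded_linear.suminf[OF T summable_sqrt_terms]
        linear_scale[OF bounded_linear.linear[OF T]])
qed

end

locale self_adjoint_contraction = contraction N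
  for N :: "'a::{real_inner, complete_space} \<Rightarrow> 'a" +
  assumes inner_N_sym: "inner (N x) y = inner x (N y)"
begin

lemma inner_funpow_sym: "inner ((N ^^ k) x) y = inner x ((N ^^ k) y)"
proof (induction k arbitrary: y)
  case (Suc k)
  have "inner ((N ^^ Suc k) x) y = inner ((N ^^ k) x) (N y)"
    by (simp add: inner_N_sym)
  also have "\<dots> = inner x ((N ^^ Suc k) y)"
    by (simp add: Suc funpow_swap1)
  finally show ?case .
qed simp

lemma inner_sqrt_id_minus_sym: "inner (sqrt_id_minus N x) y = inner x (sqrt_id_minus N y)"
proof -
  have "inner (sqrt_id_minus N x) y = (\<Sum>k. inner (sqrt_coeff k *\<^sub>R (N ^^ k) x) y)"
    unfolding sqrt_id_minus_def
    by (rule bounded_linear.suminf[OF bounded_linear_inner_left summable_sqrt_terms])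
  also have "\<dots> = (\<Sum>k. inner x (sqrt_coeff k *\<^sub>R (N ^^ k) y))"
    by (simp add: inner_funpow_sym)
  also have "\<dots> = inner x (sqrt_id_minus N y)"
    unfolding sqrt_id_minus_def
    by (rule bounded_linear.suminf[OF bounded_linear_inner_right summable_sqrt_terms, symmetric])
  finally show ?thesis .
qed

text \<open>Every term with \<open>k > 0\<close> has a nonpositive coefficient and \<open>\<langle>x, N\<^sup>k x\<rangle> \<le> \<parallel>x\<parallel>\<^sup>2\<close>,
  so the quadratic form is bounded below by \<open>(\<Sum>k. sqrt_coeff k) \<parallel>x\<parallel>\<^sup>2 \<ge> 0\<close>.\<close>
lemma inner_sqrt_id_minus_nonneg: "0 \<le> inner x (sqrt_id_minus N x)"
proof -
  have terms: "summable (\<lambda>k. inner x (sqrt_coeff k *\<^sub>R (N ^^ k) x))"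
    by (rule bounded_linear.summable[OF bounded_linear_inner_right summable_sqrt_terms])
  have "sqrt_coeff k * (norm x)\<^sup>2 \<le> inner x (sqrt_coeff k *\<^sub>R (N ^^ k) x)" for k
  proof (cases "k = 0")
    case False
    have "inner x ((N ^^ k) x) \<le> norm x * norm ((N ^^ k) x)"
      by (rule norm_cauchy_schwarz)
    also have "\<dots> \<le> (norm x)\<^sup>2"
      by (simp add: power2_eq_square mult_left_mono norm_funpow_le)
    finally show ?thesis
      using False sqrt_coeff_nonpos[of k] by (simp add: mult_left_mono_neg)
  qed (simp add: power2_norm_eq_inner)
  then have "(\<Sum>k. sqrt_coeff k * (norm x)\<^sup>2) \<le> (\<Sum>k. inner x (sqrt_coeff k *\<^sub>R (N ^^ k) x))"
    using summable_mult2[OF summable_sqrt_coeff] terms by (rule suminf_le)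
  also have "\<dots> = inner x (sqrt_id_minus N x)"
    unfolding sqrt_id_minus_def
    by (rule bounded_linear.suminf[OF bounded_linear_inner_right summable_sqrt_terms, symmetric])
  finally have "suminf sqrt_coeff * (norm x)\<^sup>2 \<le> inner x (sqrt_id_minus N x)"
    by (simp add: suminf_mult2[OF summable_sqrt_coeff])
  moreover have "0 \<le> suminf sqrt_coeff * (norm x)\<^sup>2"
    using suminf_sqrt_coeff_nonneg by simp
  ultimately show ?thesis
    by linarith
qed

lemma positive_op_sqrt_id_minus: "positive_op (sqrt_id_minus N)"
  unfolding positive_op_def self_adjoint_op_def
  using bounded_linear_sqrt_id_minus inner_sqrt_id_minus_sym inner_sqrt_id_minus_nonneg by blast

end

lemma linear_coeff_zero_if_quadratic_nonneg:
  fixes a b :: real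
  assumes "\<And>t. 0 \<le> t * a + t\<^sup>2 * b"
  shows "a = 0"
proof (rule ccontr)
  assume "a \<noteq> 0"
  define c where "c = \<bar>b\<bar> + 1"
  define t where "t = - a / c"
  have "t * c = - a"
    by (simp add: t_def c_def)
  have "(t * a + t\<^sup>2 * b) * c\<^sup>2 = a * (t * c) * c + (t * c)\<^sup>2 * b"
    by (simp add: power2_eq_square algebra_simps)
  also have "\<dots> = a * (- a) * c + (- a)\<^sup>2 * b"
    by (simp only: \<open>t * c = - a\<close>)
  also have "\<dots> = a\<^sup>2 * (b - \<bar>b\<bar> - 1)"
    by (simp add: c_def power2_eq_square algebra_simps)
  also have "\<dots> < 0"
    using \<open>a \<noteq> 0\<close> by (simp add: mult_pos_neg)
  finally show False
    using assms[of t] by (simp add: mult_less_0_iff c_def)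
qed

lemma positive_op_apply_eq_0:
  assumes A: "positive_op A" and form: "inner y (A y) = 0"
  shows "A y = 0"
proof -
  have linear_A: "bounded_linear A" and sym: "\<And>x y. inner (A x) y = inner x (A y)"
    and nonneg: "\<And>x. 0 \<le> inner x (A x)"
    using A unfolding positive_op_def self_adjoint_op_def by blast+
  interpret A: bounded_linear A
    by (rule linear_A)
  let ?z = "A y"
  have "inner y (A ?z) = inner ?z ?z"
    by (rule sym[symmetric])
  then have "inner (y + t *\<^sub>R ?z) (A (y + t *\<^sub>R ?z)) = t * (2 * inner ?z ?z) + t\<^sup>2 * inner ?z (A ?z)"
    for t
    using form by (simp add: A.add A.scaleR inner_add_left inner_add_right power2_eq_square
        algebra_simps)
  then have "0 \<le> t * (2 * inner ?z ?z) + t\<^sup>2 * inner ?z (A ?z)" for t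
    using nonneg by metis
  then have "2 * inner ?z ?z = 0"
    by (rule linear_coeff_zero_if_quadratic_nonneg)
  then show ?thesis
    by simp
qed

text \<open>Commutation gives \<open>(S + T)(S - T) = S\<^sup>2 - T\<^sup>2 = 0\<close>; positivity then forces
  \<open>S(S - T) = T(S - T) = 0\<close>, so the self-adjoint \<open>S - T\<close> squares to zero.\<close>
lemma commuting_positive_sqrt_unique:
  assumes S: "positive_op S" and T: "positive_op T"
    and square: "\<And>x. S (S x) = T (T x)" and commute: "\<And>x. S (T x) = T (S x)"
  shows "S = T"
proof
  interpret S: bounded_linear S
    using S unfolding positive_op_def self_adjoint_op_def by blast
  interpret T: bounded_linear T
    using T unfolding positive_op_def self_adjoint_op_def by blast
  have sym: "inner (S x) y = inner x (S y)" "inner (T x) y = inner x (T y)" for x y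
    using S T unfolding positive_op_def self_adjoint_op_def by blast+
  define D where "D x = S x - T x" for x
  have "S (D x) + T (D x) = 0" for x
    by (simp add: D_def S.diff T.diff square commute)
  then have "inner (D x) (S (D x)) + inner (D x) (T (D x)) = 0" for x
    by (metis inner_add_right inner_zero_right)
  moreover have "0 \<le> inner x (S x)" "0 \<le> inner x (T x)" for x
    using S T unfolding positive_op_def by blast+
  ultimately have "inner (D x) (S (D x)) = 0 \<and> inner (D x) (T (D x)) = 0" for x
    by (metis add_nonneg_eq_0_iff)
  then have "D (D x) = 0" for x
    using S T positive_op_apply_eq_0 unfolding D_def[of "D x"] by (metis diff_self)
  moreover have "inner (D x) (D x) = inner x (D (D x))" for x
    by (simp add: D_def S.diff T.diff inner_diff_left inner_diff_right sym)
  ultimately show "S x = T x" for x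
    by (simp add: D_def)
qed

lemma op_adj_eqI:
  assumes "\<And>x y. inner (X x) y = inner x (Y y)"
  shows "op_adj X = Y"
  unfolding op_adj_def
proof (rule the_equality)
  fix Z assume "\<forall>x y. inner (X x) y = inner x (Z y)"
  then have "inner (Z y - Y y) (Z y - Y y) = 0" for y
    using assms by (simp add: inner_diff_left inner_diff_right inner_commute)
  then show "Z = Y"
    by auto
qed (use assms in blast)

lemma positive_op_adjoint_comp:
  assumes "bounded_linear X" "bounded_linear Y" and adjoint: "\<And>x y. inner (X x) y = inner x (Y y)"
  shows "positive_op (\<lambda>x. Y (X x))"
  unfolding positive_op_def self_adjoint_op_def
proof (intro conjI allI)
  show "bounded_linear (\<lambda>x. Y (X x))"
    using bounded_linear_compose[OF assms(2,1)] by (simp add: o_def)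
  show "inner (Y (X x)) y = inner x (Y (X y))" for x y
    by (metis adjoint inner_commute)
  show "0 \<le> inner x (Y (X x))" for x
    by (simp flip: adjoint)
qed

lemma norm_adjoint_le:
  assumes adjoint: "\<And>x y. inner (X x) y = inner x (Y y)" and contraction: "\<And>x. norm (X x) \<le> norm x"
  shows "norm (Y y) \<le> norm y"
proof -
  have "(norm (Y y))\<^sup>2 = inner (X (Y y)) y"
    by (simp add: adjoint power2_norm_eq_inner)
  also have "\<dots> \<le> norm (Y y) * norm y"
    by (rule order_trans[OF norm_cauchy_schwarz mult_right_mono[OF contraction norm_ge_zero]])
  finally have "norm (Y y) * norm (Y y) \<le> norm (Y y) * norm y"
    by (simp add: power2_eq_square)
  then show ?thesis
    by (cases "Y y = 0") (simp_all add: mult_le_cancel_left_pos)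
qed

lemma norm_diff_adjoint_comp_le:
  assumes adjoint: "\<And>x y. inner (X x) y = inner x (Y y)" and contraction: "\<And>x. norm (X x) \<le> norm x"
  shows "norm (x - Y (X x)) \<le> norm x"
proof -
  let ?w = "X x"
  have "(norm (x - Y ?w))\<^sup>2 = (norm x)\<^sup>2 - 2 * (norm ?w)\<^sup>2 + (norm (Y ?w))\<^sup>2"
    by (simp add: power2_norm_eq_inner inner_diff_left inner_diff_right inner_commute adjoint[symmetric])
  also have "\<dots> \<le> (norm x)\<^sup>2"
  proof -
    have "(norm (Y ?w))\<^sup>2 \<le> (norm ?w)\<^sup>2"
      by (rule power_mono[OF norm_adjoint_le[OF adjoint contraction] norm_ge_zero])
    then show ?thesis
      using zero_le_power2[of "norm ?w"] by linarith
  qed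
  finally show ?thesis
    by (rule power2_le_imp_le) simp
qed

lemma self_adjoint_contraction_id_minus_adjoint_comp:
  fixes X Y :: "'a::{real_inner, complete_space} \<Rightarrow> 'a"
  assumes linear: "bounded_linear X" "bounded_linear Y"
    and adjoint: "\<And>x y. inner (X x) y = inner x (Y y)" and contraction: "\<And>x. norm (X x) \<le> norm x"
  shows "self_adjoint_contraction (\<lambda>x. x - Y (X x))"
proof (intro self_adjoint_contraction.intro contraction.intro self_adjoint_contraction_axioms.intro)
  have positive: "positive_op (\<lambda>x. Y (X x))"
    by (rule positive_op_adjoint_comp[OF linear adjoint])
  then show "bounded_linear (\<lambda>x. x - Y (X x))"
    using bounded_linear_sub[OF bounded_linear_ident]
    unfolding positive_op_def self_adjoint_op_def by blast
  show "norm (x - Y (X x)) \<le> norm x" for x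
    by (rule norm_diff_adjoint_comp_le[OF adjoint contraction])
  show "inner (x - Y (X x)) y = inner x (y - Y (X y))" for x y
    using positive by (simp add: positive_op_def self_adjoint_op_def inner_diff_left inner_diff_right)
qed

lemma op_abs_eq_sqrt_id_minus:
  fixes X Y :: "'a::{real_inner, complete_space} \<Rightarrow> 'a"
  assumes linear: "bounded_linear X" "bounded_linear Y"
    and adjoint: "\<And>x y. inner (X x) y = inner x (Y y)" and contraction: "\<And>x. norm (X x) \<le> norm x"
  shows "op_abs X = sqrt_id_minus (\<lambda>x. x - Y (X x))"
proof -
  let ?M = "\<lambda>x. Y (X x)"
  interpret self_adjoint_contraction "\<lambda>x. x - ?M x"
    by (rule self_adjoint_contraction_id_minus_adjoint_comp[OF assms])
  let ?S = "sqrt_id_minus (\<lambda>x. x - ?M x)"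
  show ?thesis
    unfolding op_abs_def op_adj_eqI[OF adjoint]
  proof (rule the_equality)
    show "positive_op ?S \<and> ?S \<circ> ?S = Y \<circ> X"
      by (simp add: positive_op_sqrt_id_minus sqrt_id_minus_squared fun_eq_iff)
    fix S' assume "positive_op S' \<and> S' \<circ> S' = Y \<circ> X"
    then have S': "positive_op S'" and square: "\<And>x. S' (S' x) = ?M x"
      by (auto simp: fun_eq_iff)
    interpret S': bounded_linear S'
      using S' unfolding positive_op_def self_adjoint_op_def by blast
    have "S' (?S x) = ?S (S' x)" for x
      by (rule sqrt_id_minus_commute[OF S'.bounded_linear_axioms]) (simp add: S'.diff flip: square)
    with S' show "S' = ?S"
      by (intro commuting_positive_sqrt_unique)
        (simp_all add: square positive_op_sqrt_id_minus sqrt_id_minus_squared)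
  qed
qed

context
  fixes X Y :: "'a::{real_inner, complete_space} \<Rightarrow> 'a"
  assumes linear: "bounded_linear X" "bounded_linear Y"
    and adjoint: "\<And>x y. inner (X x) y = inner x (Y y)" and contraction: "\<And>x. norm (X x) \<le> norm x"
begin

interpretation self_adjoint_contraction "\<lambda>x. x - Y (X x)"
  by (rule self_adjoint_contraction_id_minus_adjoint_comp[OF linear adjoint contraction])

lemma positive_op_op_abs: "positive_op (op_abs X)"
  unfolding op_abs_eq_sqrt_id_minus[OF linear adjoint contraction] by (rule positive_op_sqrt_id_minus)

lemma op_abs_squared: "op_abs X (op_abs X x) = Y (X x)"
  unfolding op_abs_eq_sqrt_id_minus[OF linear adjoint contraction] by (simp add: sqrt_id_minus_squared)

lemma op_abs_commute:
  assumes T: "bounded_linear T" and commute: "\<And>x. T (Y (X x)) = Y (X (T x))"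
  shows "T (op_abs X x) = op_abs X (T x)"
  unfolding op_abs_eq_sqrt_id_minus[OF linear adjoint contraction]
  by (rule sqrt_id_minus_commute[OF T]) (simp add: linear_diff[OF bounded_linear.linear[OF T]] commute)

lemma op_abs_eq_0:
  assumes "X x = 0"
  shows "op_abs X x = 0"
proof -
  have "inner (op_abs X x) (op_abs X x) = inner x (Y (X x))"
    using positive_op_op_abs by (simp add: positive_op_def self_adjoint_op_def op_abs_squared)
  then show ?thesis
    using assms linear(2) by (simp add: linear_0[OF bounded_linear.linear])
qed

end

lemma positive_op_add:
  assumes "positive_op A" "positive_op B"
  shows "positive_op (\<lambda>x. A x + B x)"
  using assms bounded_linear_add[of A B]
  by (auto simp: positive_op_def self_adjoint_op_def inner_add_left inner_add_right)

lemma orth_proj_norm_le: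
  assumes "orth_proj Q"
  shows "norm (Q x) \<le> norm x"
proof -
  have sym: "\<And>x y. inner (Q x) y = inner x (Q y)" and idem: "\<And>x. Q (Q x) = Q x"
    using assms unfolding orth_proj_def self_adjoint_op_def by (auto simp: fun_eq_iff dest: fun_cong)
  have "norm (Q x) * norm (Q x) = inner (Q x) (Q x)"
    by (simp add: power2_norm_eq_inner flip: power2_eq_square)
  also have "\<dots> = inner x (Q x)"
    by (simp add: sym idem)
  also have "\<dots> \<le> norm x * norm (Q x)"
    by (rule norm_cauchy_schwarz)
  finally show ?thesis
    by (cases "Q x = 0") (simp_all add: mult_le_cancel_right_pos)
qed

lemma op_le_compression_bound:
  fixes Q R R' Sigma :: "'a::{real_inner, complete_space} \<Rightarrow> 'a"
  assumes Q: "orth_proj Q" and R: "orth_proj R"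
    and QR: "\<And>x. Q (R x) = 0" and RQ: "\<And>x. R (Q x) = 0"
    and R': "\<And>x. R' x = x - R x"
    and Sigma: "self_adjoint_op Sigma" and Sigma_le: "\<And>x. norm (Sigma x) \<le> norm x"
  shows "op_le
           (Q \<circ> (\<lambda>x. R' x - (R' \<circ> Sigma \<circ> R' \<circ> R' \<circ> Sigma \<circ> R') x) \<circ> Q)
           ((\<lambda>x. Q x + op_abs (R \<circ> Sigma \<circ> Q) x) \<circ> (\<lambda>x. Q x + op_abs (R \<circ> Sigma \<circ> Q) x))"
proof -
  have linear: "bounded_linear Q" "bounded_linear R" "bounded_linear Sigma"
    and sym: "\<And>x y. inner (Q x) y = inner x (Q y)" "\<And>x y. inner (R x) y = inner x (R y)"
      "\<And>x y. inner (Sigma x) y = inner x (Sigma y)"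
    and idem: "\<And>x. Q (Q x) = Q x" "\<And>x. R (R x) = R x"
    using Q R Sigma unfolding orth_proj_def self_adjoint_op_def by (auto simp: fun_eq_iff dest: fun_cong)
  interpret Q: bounded_linear Q by (fact linear(1))
  interpret R: bounded_linear R by (fact linear(2))
  interpret Sigma: bounded_linear Sigma by (fact linear(3))
  let ?X = "\<lambda>x. R (Sigma (Q x))" and ?Y = "\<lambda>x. Q (Sigma (R x))"
  have linear_XY: "bounded_linear ?X" "bounded_linear ?Y"
    using linear by (auto intro: bounded_linear_compose[unfolded o_def])
  have adjoint: "inner (?X x) y = inner x (?Y y)" for x y
    by (simp add: sym)
  have contraction: "norm (?X x) \<le> norm x" for x
    using orth_proj_norm_le[OF R, of "Sigma (Q x)"] Sigma_le[of "Q x"] orth_proj_norm_le[OF Q, of x]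
    by linarith
  define S where "S = op_abs (R \<circ> Sigma \<circ> Q)"
  have S_eq: "S = op_abs ?X"
    by (simp add: S_def o_def)
  have S_pos: "positive_op S"
    unfolding S_eq by (rule positive_op_op_abs[OF linear_XY adjoint contraction])
  have S_squared: "S (S x) = ?Y (?X x)" for x
    unfolding S_eq by (rule op_abs_squared[OF linear_XY adjoint contraction])
  interpret S: bounded_linear S
    using S_pos unfolding positive_op_def self_adjoint_op_def by blast
  have S_Q: "S (Q x) = S x" for x
  proof -
    have "S (x - Q x) = 0"
      unfolding S_eq by (rule op_abs_eq_0[OF linear_XY adjoint contraction]) (simp add: Q.diff idem)
    then show ?thesis
      by (simp add: S.diff)
  qed
  have Q_S: "Q (S x) = S x" for x
    unfolding S_eq using op_abs_commute[OF linear_XY adjoint contraction linear(1)] idem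
    by (simp add: S_Q[unfolded S_eq])
  have "(\<lambda>x. ((\<lambda>x. Q x + S x) \<circ> (\<lambda>x. Q x + S x)) x
      - (Q \<circ> (\<lambda>x. R' x - (R' \<circ> Sigma \<circ> R' \<circ> R' \<circ> Sigma \<circ> R') x) \<circ> Q) x)
      = (\<lambda>x. S x + (S x + Q (Sigma (Sigma (Q x)))))"
    by (simp add: fun_eq_iff R' Q.add Q.diff R.diff Sigma.add Sigma.diff S.add idem QR RQ S_Q Q_S S_squared
        algebra_simps)
  moreover have "positive_op (\<lambda>x. S x + (S x + Q (Sigma (Sigma (Q x)))))"
    using S_pos positive_op_adjoint_comp[of "\<lambda>x. Sigma (Q x)" "\<lambda>x. Q (Sigma x)"] linear
    by (intro positive_op_add) (auto intro: bounded_linear_compose[unfolded o_def] simp: sym)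
  ultimately show ?thesis
    by (simp add: op_le_def S_def)
qed

theorem mainTheorem3:
  fixes P :: "'x::topological_space set \<Rightarrow> 'a::{real_inner, complete_space} \<Rightarrow> 'a"
    and Sigma :: "'a \<Rightarrow> 'a"
    and A B B' :: "'x set"
  assumes loc: "localization P"
    and Sigma_sa: "self_adjoint_op Sigma"
    and Sigma_contr: "onorm Sigma \<le> 1"
    and A_open: "open A" and B_open: "open B" and AB_disj: "A \<inter> B = {}"
    and B'_def: "B' = UNIV - closure B"
    and PB_sum: "\<forall>x. P B x + P B' x = x"
  shows "op_le
           (P A \<circ> (\<lambda>x. P B' x - (P B' \<circ> Sigma \<circ> P B' \<circ> P B' \<circ> Sigma \<circ> P B') x) \<circ> P A)
           ((\<lambda>x. P A x + op_abs (P B \<circ> Sigma \<circ> P A) x) \<circ>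
            (\<lambda>x. P A x + op_abs (P B \<circ> Sigma \<circ> P A) x))"
proof (rule op_le_compression_bound)
  have inter: "\<And>V W. open V \<Longrightarrow> open W \<Longrightarrow> P (V \<inter> W) = P V \<circ> P W"
    and empty: "P {} = (\<lambda>_. 0)"
    using loc unfolding localization_def by blast+
  show "orth_proj (P A)" "orth_proj (P B)"
    using loc A_open B_open unfolding localization_def by blast+
  show "P A (P B x) = 0" "P B (P A x) = 0" for x
    using inter[OF A_open B_open] inter[OF B_open A_open] AB_disj
    by (simp_all add: Int_commute empty fun_eq_iff)
  show "P B' x = x - P B x" for x
    using PB_sum by (simp add: eq_diff_eq add.commute)
  show "self_adjoint_op Sigma"
    by (fact Sigma_sa)
  show "norm (Sigma x) \<le> norm x" for x
  proof -
    have "norm (Sigma x) \<le> onorm Sigma * norm x"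
      using Sigma_sa by (simp add: onorm self_adjoint_op_def)
    also have "\<dots> \<le> norm x"
      using mult_right_mono[OF Sigma_contr norm_ge_zero] by simp
    finally show ?thesis .
  qed
qed

end
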